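(* Let $X_1,\ldots,X_n$ be (arbitrary, possibly dependent) $\{0,1\}$-valued random variables. Let $K\subsetneq[n]$ and $a_K\in\{0,1\}^K$ with $\Pr[X_K=a_K]>0$. Then there exists $i\in[n]\setminus K$ such that either $X_i$ is almost surely constant conditioned on $X_K=a_K$, or both events $\{X_K=a_K, X_i=0\}$ and $\{X_K=a_K,X_i=1\}$ have positive probability and $$\sum_{\ell\in[n]\setminus(K\cup\{i\})}\Big(\mathbb{E}[X_\ell\mid X_K=a_K, X_i=0]-\mathbb{E}[X_\ell\mid X_K=a_K, X_i=1]\Big)\le 1.$$
   Context: For $S\subseteq[n]$, $X_S\in\{0,1\}^S$ denotes the tuple $(X_i)_{i\in S}$. *)

theory Defs
  imports "HOL-Probability.Probability"
begin

text \<open>The event X_K = a_K, for {0,1}-valued random variables encoded as bool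
  (True = 1, False = 0).\<close>
definition assign_event :: "'a measure \<Rightarrow> (nat \<Rightarrow> 'a \<Rightarrow> bool) \<Rightarrow> nat set \<Rightarrow> (nat \<Rightarrow> bool) \<Rightarrow> 'a set" where
  "assign_event M X K a = {\<omega> \<in> space M. \<forall>k\<in>K. X k \<omega> = a k}"

definition cond_exp_event :: "'a measure \<Rightarrow> 'a set \<Rightarrow> ('a \<Rightarrow> real) \<Rightarrow> real" where
  "cond_exp_event M B f = (\<integral>\<omega>. indicator B \<omega> * f \<omega> \<partial>M) / measure M B"

end

theory Submission
  imports Defs
begin

text \<open>Conditioning on \<open>X\<^sub>K = a\<^sub>K\<close> (the uniform measure on that event) reduces the theorem to
  \<open>K = {}\<close>. There, with \<open>S = \<Sum>\<^sub>j X\<^sub>j\<close>, the covariances \<open>Cov(X\<^sub>i, S)\<close> add up to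
  \<open>Var S \<ge> 0\<close>, so some \<open>i\<close> has \<open>Cov(X\<^sub>i, S) \<ge> 0\<close>. If \<open>p = P[X\<^sub>i = 1] \<in> (0,1)\<close>, the
  conditional gap of \<open>S - X\<^sub>i\<close> between \<open>X\<^sub>i = 0\<close> and \<open>X\<^sub>i = 1\<close> equals
  \<open>1 - Cov(X\<^sub>i, S) / (p (1 - p))\<close>, hence is at most 1.\<close>

lemma integral_uniform_measure:
  fixes f :: "'a \<Rightarrow> real"
  assumes "0 < measure M A" "f \<in> borel_measurable M"
  shows "(\<integral>x. f x \<partial>uniform_measure M A) = (\<integral>x. indicator A x * f x \<partial>M) / measure M A"
proof -
  have A: "A \<in> sets M"
    using assms(1) measure_notin_sets by fastforce
  have "emeasure M A = ennreal (measure M A)"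
    using assms(1) by (intro emeasure_eq_ennreal_measure) (auto simp: measure_zero_top)
  then have "uniform_measure M A = density M (\<lambda>x. ennreal (indicator A x / measure M A))"
    unfolding uniform_measure_def using assms(1) A
    by (intro density_cong) (auto simp: divide_ennreal ennreal_indicator[symmetric])
  then show ?thesis
    using assms A by (simp add: integral_density)
qed

lemma prob_space_uniform_measure_of_measure_pos:
  assumes "0 < measure M B"
  shows "prob_space (uniform_measure M B)"
  using assms measure_zero_top by (intro prob_space_uniform_measure) (fastforce simp: measure_def)+

lemma measure_uniform_measure_Collect:
  assumes "0 < measure M B" "Measurable.pred M P"
  shows "measure (uniform_measure M B) {\<omega>\<in>space M. P \<omega>} = measure M (B \<inter> {\<omega>. P \<omega>}) / measure M B"
proof -
  have "B \<subseteq> space M"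
    using assms(1) measure_notin_sets sets.sets_into_space by fastforce
  then have "B \<inter> {\<omega>\<in>space M. P \<omega>} = B \<inter> {\<omega>. P \<omega>}"
    by blast
  with assms show ?thesis
    by (subst measure_uniform_measure) (auto simp: measure_def)
qed

lemma cond_exp_event_uniform_measure_Collect:
  assumes "0 < measure M B" "Measurable.pred M P" "f \<in> borel_measurable M"
  shows "cond_exp_event (uniform_measure M B) {\<omega>\<in>space M. P \<omega>} f = cond_exp_event M (B \<inter> {\<omega>. P \<omega>}) f"
proof -
  have "B \<subseteq> space M"
    using assms(1) measure_notin_sets sets.sets_into_space by fastforce
  have "(\<integral>x. indicator {\<omega>\<in>space M. P \<omega>} x * f x \<partial>uniform_measure M B)
      = (\<integral>x. indicator B x * (indicator {\<omega>\<in>space M. P \<omega>} x * f x) \<partial>M) / measure M B"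
    using assms by (simp add: integral_uniform_measure)
  also have "(\<integral>x. indicator B x * (indicator {\<omega>\<in>space M. P \<omega>} x * f x) \<partial>M)
      = (\<integral>x. indicator (B \<inter> {\<omega>. P \<omega>}) x * f x \<partial>M)"
    using \<open>B \<subseteq> space M\<close> by (intro Bochner_Integration.integral_cong) (auto simp: indicator_def)
  finally show ?thesis
    using assms by (simp add: cond_exp_event_def measure_uniform_measure_Collect)
qed

lemma AE_uniform_measure_Collect_eq_0:
  assumes "0 < measure M B" "Measurable.pred M P"
    and "measure (uniform_measure M B) {\<omega>\<in>space M. P \<omega>} = 0"
  shows "AE \<omega> in M. \<omega> \<in> B \<longrightarrow> \<not> P \<omega>"
proof -
  interpret prob_space "uniform_measure M B"
    using assms(1) by (rule prob_space_uniform_measure_of_measure_pos)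
  have "AE \<omega> in uniform_measure M B. \<not> P \<omega>"
    using assms(2,3) prob_eq_0[of "{\<omega>\<in>space M. P \<omega>}"] by (auto elim: AE_mp)
  moreover have "emeasure M B \<noteq> 0" "emeasure M B < \<infinity>"
    using assms(1) measure_zero_top[of M B] by (auto simp: measure_def less_top[symmetric])
  ultimately show ?thesis
    by (simp add: AE_uniform_measure)
qed

lemma cond_exp_event_Collect:
  "cond_exp_event M {\<omega>\<in>space M. P \<omega>} f
     = (\<integral>\<omega>. of_bool (P \<omega>) * f \<omega> \<partial>M) / measure M {\<omega>\<in>space M. P \<omega>}"
  unfolding cond_exp_event_def by (rule arg_cong2[where f="(/)"], rule Bochner_Integration.integral_cong) auto

lemma cond_exp_event_sum:
  fixes f :: "'i \<Rightarrow> 'a \<Rightarrow> real"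
  assumes "A \<in> sets M" "\<And>l. l \<in> L \<Longrightarrow> integrable M (f l)"
  shows "(\<Sum>l\<in>L. cond_exp_event M A (f l)) = cond_exp_event M A (\<lambda>\<omega>. \<Sum>l\<in>L. f l \<omega>)"
proof -
  have "(\<Sum>l\<in>L. \<integral>\<omega>. indicator A \<omega> * f l \<omega> \<partial>M) = (\<integral>\<omega>. (\<Sum>l\<in>L. indicator A \<omega> * f l \<omega>) \<partial>M)"
    using integrable_mult_indicator[OF assms(1) assms(2)]
    by (intro Bochner_Integration.integral_sum[symmetric]) simp
  then show ?thesis
    by (simp add: cond_exp_event_def sum_divide_distrib[symmetric] sum_distrib_left)
qed

lemma (in finite_measure) integrable_of_bool:
  assumes "Measurable.pred M P"
  shows "integrable M (\<lambda>\<omega>. of_bool (P \<omega>) :: real)"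
proof -
  have "{\<omega>\<in>space M. P \<omega>} \<in> sets M"
    using assms by measurable
  then have "integrable M (indicator {\<omega>\<in>space M. P \<omega>} :: 'a \<Rightarrow> real)"
    by (intro integrable_real_indicator) (simp_all add: emeasure_eq_measure)
  then show ?thesis
    by (rule Bochner_Integration.integrable_cong[THEN iffD1, rotated 2]) auto
qed

lemma measure_Collect_eq_integral_of_bool:
  "measure M {\<omega>\<in>space M. P \<omega>} = (\<integral>\<omega>. of_bool (P \<omega>) \<partial>M)"
proof -
  have "(\<integral>\<omega>. of_bool (P \<omega>) \<partial>M) = integral\<^sup>L M (indicator {\<omega>\<in>space M. P \<omega>})"
    by (rule Bochner_Integration.integral_cong) auto
  also have "\<dots> = measure M {\<omega>\<in>space M. P \<omega>}"
    by (subst Bochner_Integration.integral_indicator) (intro arg_cong[where f="measure M"], auto)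
  finally show ?thesis ..
qed

lemma (in prob_space) exists_nonneg_covariance_with_sum:
  fixes x :: "'i \<Rightarrow> 'a \<Rightarrow> real"
  assumes "finite J" "J \<noteq> {}"
    and "\<And>l. l \<in> J \<Longrightarrow> integrable M (x l)"
    and "\<And>k l. k \<in> J \<Longrightarrow> l \<in> J \<Longrightarrow> integrable M (\<lambda>\<omega>. x k \<omega> * x l \<omega>)"
  shows "\<exists>i\<in>J. expectation (x i) * expectation (\<lambda>\<omega>. \<Sum>l\<in>J. x l \<omega>)
              \<le> expectation (\<lambda>\<omega>. x i \<omega> * (\<Sum>l\<in>J. x l \<omega>))"
proof (rule ccontr)
  define S where "S = (\<lambda>\<omega>. \<Sum>l\<in>J. x l \<omega>)"
  have int_xS: "integrable M (\<lambda>\<omega>. x i \<omega> * S \<omega>)" if "i \<in> J" for i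
    using assms(4) that by (simp add: S_def sum_distrib_left)
  have "(\<lambda>\<omega>. (S \<omega>)\<^sup>2) = (\<lambda>\<omega>. \<Sum>i\<in>J. x i \<omega> * S \<omega>)"
    by (simp add: power2_eq_square S_def sum_distrib_right)
  then have "variance S = expectation (\<lambda>\<omega>. (S \<omega>)\<^sup>2) - (expectation S)\<^sup>2"
    using assms(3) int_xS by (intro variance_eq) (simp_all add: S_def)
  also have "expectation (\<lambda>\<omega>. (S \<omega>)\<^sup>2) = (\<Sum>i\<in>J. expectation (\<lambda>\<omega>. x i \<omega> * S \<omega>))"
    using int_xS by (simp add: power2_eq_square S_def[symmetric] sum_distrib_right[symmetric])
      (simp add: S_def sum_distrib_right)
  also have "(expectation S)\<^sup>2 = (\<Sum>i\<in>J. expectation (x i) * expectation S)"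
    using assms(3) by (simp add: power2_eq_square sum_distrib_right[symmetric]) (simp add: S_def)
  also assume "\<not> ?thesis"
  then have "(\<Sum>i\<in>J. expectation (\<lambda>\<omega>. x i \<omega> * S \<omega>)) - (\<Sum>i\<in>J. expectation (x i) * expectation S) < 0"
    using assms(1,2) sum_strict_mono[of J "\<lambda>i. expectation (\<lambda>\<omega>. x i \<omega> * S \<omega>)"]
    by (simp add: S_def not_le)
  finally show False
    using variance_positive[of S] by simp
qed

lemma conditional_gap_eq:
  fixes p t u :: real
  assumes "0 < p" "p < 1"
  shows "(u - t) / (1 - p) - (t - p) / p = 1 - (t - p * u) / (p * (1 - p))"
  using assms by (simp add: field_simps)

lemma (in prob_space) sum_cond_exp_event_of_bool:
  fixes Y :: "'i \<Rightarrow> 'a \<Rightarrow> bool"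
  defines "x \<equiv> \<lambda>l \<omega>. of_bool (Y l \<omega>) :: real"
  assumes J: "finite J" "i \<in> J"
    and Y: "\<And>l. l \<in> J \<Longrightarrow> Y l \<in> M \<rightarrow>\<^sub>M count_space UNIV"
  shows "(\<Sum>l\<in>J - {i}. cond_exp_event M {\<omega>\<in>space M. Y i \<omega> = True} (x l))
      = (expectation (\<lambda>\<omega>. x i \<omega> * (\<Sum>l\<in>J. x l \<omega>)) - expectation (x i))
        / prob {\<omega>\<in>space M. Y i \<omega> = True}" (is ?given_True)
    and "(\<Sum>l\<in>J - {i}. cond_exp_event M {\<omega>\<in>space M. Y i \<omega> = False} (x l))
      = (expectation (\<lambda>\<omega>. \<Sum>l\<in>J. x l \<omega>) - expectation (\<lambda>\<omega>. x i \<omega> * (\<Sum>l\<in>J. x l \<omega>)))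
        / prob {\<omega>\<in>space M. Y i \<omega> = False}" (is ?given_False)
proof -
  define S where "S = (\<lambda>\<omega>. \<Sum>l\<in>J. x l \<omega>)"
  have [measurable]: "Measurable.pred M (Y l)" if "l \<in> J" for l
    using Y[OF that] by (simp add: pred_def)
  have int_x: "integrable M (x l)" if "l \<in> J" for l
    using that unfolding x_def by (intro integrable_of_bool) measurable
  have int_xx: "integrable M (\<lambda>\<omega>. x k \<omega> * x l \<omega>)" if "k \<in> J" "l \<in> J" for k l
    using that unfolding x_def of_bool_conj[symmetric] by (intro integrable_of_bool) measurable
  have int_S: "integrable M S" and int_xS: "integrable M (\<lambda>\<omega>. x i \<omega> * S \<omega>)"
    using J int_x int_xx by (simp_all add: S_def sum_distrib_left)
  have sum_cond: "(\<Sum>l\<in>J - {i}. cond_exp_event M {\<omega>\<in>space M. Y i \<omega> = c} (x l))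
      = (\<integral>\<omega>. of_bool (Y i \<omega> = c) * (S \<omega> - x i \<omega>) \<partial>M) / prob {\<omega>\<in>space M. Y i \<omega> = c}" for c
  proof -
    have "{\<omega>\<in>space M. Y i \<omega> = c} \<in> sets M"
      using J(2) by measurable
    then have "(\<Sum>l\<in>J - {i}. cond_exp_event M {\<omega>\<in>space M. Y i \<omega> = c} (x l))
        = cond_exp_event M {\<omega>\<in>space M. Y i \<omega> = c} (\<lambda>\<omega>. \<Sum>l\<in>J - {i}. x l \<omega>)"
      using int_x by (intro cond_exp_event_sum) auto
    also have "(\<lambda>\<omega>. \<Sum>l\<in>J - {i}. x l \<omega>) = (\<lambda>\<omega>. S \<omega> - x i \<omega>)"
      using J by (simp add: S_def sum_diff1)
    finally show ?thesis
      by (simp add: cond_exp_event_Collect)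
  qed
  have "(\<integral>\<omega>. of_bool (Y i \<omega> = True) * (S \<omega> - x i \<omega>) \<partial>M) = expectation (\<lambda>\<omega>. x i \<omega> * S \<omega> - x i \<omega>)"
    by (rule Bochner_Integration.integral_cong) (auto simp: x_def)
  with sum_cond[of True] int_xS int_x[OF J(2)] show ?given_True
    by (simp add: S_def)
  have "(\<integral>\<omega>. of_bool (Y i \<omega> = False) * (S \<omega> - x i \<omega>) \<partial>M) = expectation (\<lambda>\<omega>. S \<omega> - x i \<omega> * S \<omega>)"
    by (rule Bochner_Integration.integral_cong) (auto simp: x_def)
  with sum_cond[of False] int_xS int_S show ?given_False
    by (simp add: S_def)
qed

lemma (in prob_space) conditional_gap_le_one_iff_covariance_nonneg:
  fixes Y :: "'i \<Rightarrow> 'a \<Rightarrow> bool"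
  defines "x \<equiv> \<lambda>l \<omega>. of_bool (Y l \<omega>) :: real"
  assumes J: "finite J" "i \<in> J"
    and Y: "\<And>l. l \<in> J \<Longrightarrow> Y l \<in> M \<rightarrow>\<^sub>M count_space UNIV"
    and nondegenerate: "\<And>c. prob {\<omega>\<in>space M. Y i \<omega> = c} \<noteq> 0"
  shows "(\<Sum>l\<in>J - {i}. cond_exp_event M {\<omega>\<in>space M. Y i \<omega> = False} (x l)
                   - cond_exp_event M {\<omega>\<in>space M. Y i \<omega> = True} (x l)) \<le> 1
    \<longleftrightarrow> expectation (x i) * expectation (\<lambda>\<omega>. \<Sum>l\<in>J. x l \<omega>)
        \<le> expectation (\<lambda>\<omega>. x i \<omega> * (\<Sum>l\<in>J. x l \<omega>))"
proof -
  define S where "S = (\<lambda>\<omega>. \<Sum>l\<in>J. x l \<omega>)"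
  define E where "E c = {\<omega>\<in>space M. Y i \<omega> = c}" for c
  define p where "p = expectation (x i)"
  define t where "t = expectation (\<lambda>\<omega>. x i \<omega> * S \<omega>)"
  define u where "u = expectation S"
  have "E True \<in> sets M"
    using Y[OF J(2)] by (simp add: E_def pred_def)
  moreover have "E False = space M - E True"
    by (auto simp: E_def)
  moreover have prob_True: "prob (E True) = p"
    unfolding E_def measure_Collect_eq_integral_of_bool p_def x_def by simp
  ultimately have prob_False: "prob (E False) = 1 - p"
    by (simp add: prob_compl)
  have "0 < prob (E c)" for c
    using nondegenerate[of c] measure_nonneg[of M "E c"] by (auto simp: E_def less_le)
  from this[of True] this[of False] have p: "0 < p" "p < 1"
    using prob_True prob_False by linarith+
  then have "0 < p * (1 - p)"
    by simp
  moreover have "(\<Sum>l\<in>J - {i}. cond_exp_event M (E False) (x l) - cond_exp_event M (E True) (x l))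
      = 1 - (t - p * u) / (p * (1 - p))"
  proof -
    have "of_bool (Y l \<omega>) = x l \<omega>" for l \<omega>
      by (simp add: x_def)
    with sum_cond_exp_event_of_bool[where Y=Y and J=J and i=i, OF J Y] show ?thesis
      unfolding sum_subtractf E_def[symmetric] prob_True prob_False conditional_gap_eq[OF p, symmetric]
      by (simp add: S_def t_def p_def u_def)
  qed
  ultimately show ?thesis
    unfolding E_def by (simp add: zero_le_divide_iff S_def t_def p_def u_def)
qed

lemma (in prob_space) exists_conditional_gap_le_one:
  fixes Y :: "'i \<Rightarrow> 'a \<Rightarrow> bool"
  assumes J: "finite J" "J \<noteq> {}"
    and Y: "\<And>l. l \<in> J \<Longrightarrow> Y l \<in> M \<rightarrow>\<^sub>M count_space UNIV"
  shows "\<exists>i\<in>J. (\<exists>c. prob {\<omega>\<in>space M. Y i \<omega> = c} = 0)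
    \<or> (\<Sum>l\<in>J - {i}. cond_exp_event M {\<omega>\<in>space M. Y i \<omega> = False} (\<lambda>\<omega>. of_bool (Y l \<omega>))
                  - cond_exp_event M {\<omega>\<in>space M. Y i \<omega> = True} (\<lambda>\<omega>. of_bool (Y l \<omega>))) \<le> 1"
proof -
  define x where "x l \<omega> = (of_bool (Y l \<omega>) :: real)" for l \<omega>
  have [measurable]: "Measurable.pred M (Y l)" if "l \<in> J" for l
    using Y[OF that] by (simp add: pred_def)
  have "integrable M (x l)" "integrable M (\<lambda>\<omega>. x k \<omega> * x l \<omega>)" if "k \<in> J" "l \<in> J" for k l
    using that unfolding x_def of_bool_conj[symmetric] by (intro integrable_of_bool; measurable)+
  then obtain i where i: "i \<in> J"
    and "expectation (x i) * expectation (\<lambda>\<omega>. \<Sum>l\<in>J. x l \<omega>)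
      \<le> expectation (\<lambda>\<omega>. x i \<omega> * (\<Sum>l\<in>J. x l \<omega>))"
    using exists_nonneg_covariance_with_sum[OF J] by blast
  with conditional_gap_le_one_iff_covariance_nonneg[of J i Y] J(1) Y show ?thesis
    unfolding x_def by (intro bexI[OF _ i]) blast
qed

lemma exists_conditional_gap_le_one_on_event:
  fixes Y :: "'i \<Rightarrow> 'a \<Rightarrow> bool"
  assumes B: "0 < measure M B"
    and J: "finite J" "J \<noteq> {}"
    and Y: "\<And>l. l \<in> J \<Longrightarrow> Y l \<in> M \<rightarrow>\<^sub>M count_space UNIV"
  shows "\<exists>i\<in>J. (\<exists>c. AE \<omega> in M. \<omega> \<in> B \<longrightarrow> Y i \<omega> = c)
    \<or> (measure M (B \<inter> {\<omega>. Y i \<omega> = False}) > 0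
      \<and> measure M (B \<inter> {\<omega>. Y i \<omega> = True}) > 0
      \<and> (\<Sum>l\<in>J - {i}. cond_exp_event M (B \<inter> {\<omega>. Y i \<omega> = False}) (\<lambda>\<omega>. of_bool (Y l \<omega>))
                    - cond_exp_event M (B \<inter> {\<omega>. Y i \<omega> = True}) (\<lambda>\<omega>. of_bool (Y l \<omega>))) \<le> 1)"
proof -
  define N where "N = uniform_measure M B"
  interpret N: prob_space N
    unfolding N_def using B by (rule prob_space_uniform_measure_of_measure_pos)
  have "\<And>l. l \<in> J \<Longrightarrow> Y l \<in> N \<rightarrow>\<^sub>M count_space UNIV"
    using Y by (simp add: N_def)
  from N.exists_conditional_gap_le_one[OF J this] obtain i where i: "i \<in> J"
    and gap: "(\<exists>c. N.prob {\<omega>\<in>space N. Y i \<omega> = c} = 0)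
      \<or> (\<Sum>l\<in>J - {i}. cond_exp_event N {\<omega>\<in>space N. Y i \<omega> = False} (\<lambda>\<omega>. of_bool (Y l \<omega>))
                    - cond_exp_event N {\<omega>\<in>space N. Y i \<omega> = True} (\<lambda>\<omega>. of_bool (Y l \<omega>))) \<le> 1" ..
  have [measurable]: "Measurable.pred M (Y l)" if "l \<in> J" for l
    using Y[OF that] by (simp add: pred_def)
  note [measurable] = this[OF i]
  show ?thesis
  proof (cases "\<exists>c. N.prob {\<omega>\<in>space N. Y i \<omega> = c} = 0")
    case True
    then obtain c where c: "measure (uniform_measure M B) {\<omega>\<in>space M. Y i \<omega> = c} = 0"
      unfolding N_def space_uniform_measure by blast
    have "AE \<omega> in M. \<omega> \<in> B \<longrightarrow> \<not> Y i \<omega> = c"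
      by (rule AE_uniform_measure_Collect_eq_0[OF B _ c]) measurable
    then have "AE \<omega> in M. \<omega> \<in> B \<longrightarrow> Y i \<omega> = (\<not> c)"
      by (rule eventually_mono) auto
    then show ?thesis
      by (intro bexI[OF _ i] disjI1 exI)
  next
    case False
    have "N.prob {\<omega>\<in>space N. Y i \<omega> = c} = measure M (B \<inter> {\<omega>. Y i \<omega> = c}) / measure M B" for c
      unfolding N_def space_uniform_measure by (rule measure_uniform_measure_Collect[OF B]) measurable
    with False have pos: "0 < measure M (B \<inter> {\<omega>. Y i \<omega> = c})" for c
      using measure_nonneg[of M "B \<inter> {\<omega>. Y i \<omega> = c}"] by (auto simp: less_le)
    have "cond_exp_event N {\<omega>\<in>space N. Y i \<omega> = c} (\<lambda>\<omega>. of_bool (Y l \<omega>))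
        = cond_exp_event M (B \<inter> {\<omega>. Y i \<omega> = c}) (\<lambda>\<omega>. of_bool (Y l \<omega>))" if "l \<in> J" for c l
      unfolding N_def space_uniform_measure using that by (intro cond_exp_event_uniform_measure_Collect[OF B]) measurable
    then have "(\<Sum>l\<in>J - {i}. cond_exp_event N {\<omega>\<in>space N. Y i \<omega> = False} (\<lambda>\<omega>. of_bool (Y l \<omega>))
                    - cond_exp_event N {\<omega>\<in>space N. Y i \<omega> = True} (\<lambda>\<omega>. of_bool (Y l \<omega>)))
        = (\<Sum>l\<in>J - {i}. cond_exp_event M (B \<inter> {\<omega>. Y i \<omega> = False}) (\<lambda>\<omega>. of_bool (Y l \<omega>))
                    - cond_exp_event M (B \<inter> {\<omega>. Y i \<omega> = True}) (\<lambda>\<omega>. of_bool (Y l \<omega>)))"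
      by (intro sum.cong refl) (simp only: Diff_iff)
    with gap False have "(\<Sum>l\<in>J - {i}. cond_exp_event M (B \<inter> {\<omega>. Y i \<omega> = False}) (\<lambda>\<omega>. of_bool (Y l \<omega>))
                    - cond_exp_event M (B \<inter> {\<omega>. Y i \<omega> = True}) (\<lambda>\<omega>. of_bool (Y l \<omega>))) \<le> 1"
      by simp
    with pos[of False] pos[of True] show ?thesis
      by (intro bexI[OF _ i] disjI2 conjI)
  qed
qed

theorem mainTheorem2:
  fixes M :: "'a measure" and X :: "nat \<Rightarrow> 'a \<Rightarrow> bool" and n :: nat
    and K :: "nat set" and a :: "nat \<Rightarrow> bool"
  assumes "prob_space M"
    and "\<And>i. i \<in> {1..n} \<Longrightarrow> X i \<in> M \<rightarrow>\<^sub>M count_space UNIV"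
    and "K \<subset> {1..n}"
    and "measure M (assign_event M X K a) > 0"
  shows "\<exists>i \<in> {1..n} - K.
     (\<exists>c. AE \<omega> in M. \<omega> \<in> assign_event M X K a \<longrightarrow> X i \<omega> = c)
   \<or> (measure M (assign_event M X K a \<inter> {\<omega>. X i \<omega> = False}) > 0
      \<and> measure M (assign_event M X K a \<inter> {\<omega>. X i \<omega> = True}) > 0
      \<and> (\<Sum>l \<in> {1..n} - (K \<union> {i}).
           cond_exp_event M (assign_event M X K a \<inter> {\<omega>. X i \<omega> = False}) (\<lambda>\<omega>. of_bool (X l \<omega>))
         - cond_exp_event M (assign_event M X K a \<inter> {\<omega>. X i \<omega> = True}) (\<lambda>\<omega>. of_bool (X l \<omega>))) \<le> 1)"
proof -
  have "\<And>i. {1..n} - (K \<union> {i}) = {1..n} - K - {i}"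
    by blast
  then show ?thesis
    using assms(2-4) by (simp only:) (rule exists_conditional_gap_le_one_on_event; auto)
qed

end
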